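(* Let $(G,q)$ be a pointed graph and $k\ge 0$ an integer. (1) For every oriented $k$-spanning tree $\mathcal T$ of $(G,q)$, the divisor $D_{\mathcal T}$ is $q$-reduced. (2) For every $q$-reduced divisor $D$ with $D(q)=-1$ and $\deg(D)=k-1$, there exists an oriented $k$-spanning tree $\mathcal T$ of $(G,q)$ with $D_{\mathcal T}\sim D$.
   Context: $G$ is a finite connected multigraph without loops with $n$ vertices, $q\in V(G)$. $\mathbb E(G)$ is the set of oriented edges (each edge gives two opposite oriented edges $e,\bar e$, with head $e_+$ and tail $e_-$). For a set $\mathcal P\subseteq\mathbb E(G)$, $\mathrm{indeg}_{\mathcal P}(v)=|\{e\in\mathcal P:e_+=v\}|$ and $D_{\mathcal P}=\sum_v(\mathrm{indeg}_{\mathcal P}(v)-1)(v)$. An oriented $k$-spanning tree of $(G,q)$ is a subset $\mathcal T\subseteq\mathbb E(G)$ with $|\mathcal T|=n-1+k$ such that the directed graph $(V(G),\mathcal T)$ has no directed cycle, $\mathrm{indeg}_{\mathcal T}(q)=0$, and $\mathrm{indeg}_{\mathcal T}(v)\ge1$ for all $v\neq q$ (so $q$ is its unique source). A divisor is an integer combination $D=\sum_v D(v)(v)$ of vertices, $\deg D=\sum_v D(v)$. $D$ is $q$-reduced if $D(v)\ge 0$ for all $v\ne q$ and for every nonempty $A\subseteq V(G)\setminus\{q\}$ there is $v\in A$ such that $D(v)$ is less than the number of edges joining $v$ to vertices outside $A$. Linear equivalence: $D_1\sim D_2$ iff $D_2=D_1-\Delta(f)$ for some $f:V(G)\to\mathbb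 Z$, where $\Delta(f)=\sum_v\sum_{\{v,w\}\in E(G)}(f(v)-f(w))(v)$. *)

theory Defs
  imports Main
begin

text \<open>A finite loopless multigraph: vertex set V, edge set E, and each edge e has
  an (arbitrary reference) pair of distinct endpoints ends e.
  Oriented edges are pairs (e, b): (e, True) goes from fst (ends e) to snd (ends e),
  (e, False) is the opposite orientation.\<close>

definition multigraph :: "'v set \<Rightarrow> 'e set \<Rightarrow> ('e \<Rightarrow> 'v \<times> 'v) \<Rightarrow> bool" where
  "multigraph V E ends \<longleftrightarrow> finite V \<and> finite E \<and>
     (\<forall>e\<in>E. fst (ends e) \<in> V \<and> snd (ends e) \<in> V \<and> fst (ends e) \<noteq> snd (ends e))"

definition adj_rel :: "'e set \<Rightarrow> ('e \<Rightarrow> 'v \<times> 'v) \<Rightarrow> ('v \<times> 'v) set" where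
  "adj_rel E ends = {(fst (ends e), snd (ends e)) | e. e \<in> E} \<union> {(snd (ends e), fst (ends e)) | e. e \<in> E}"

definition connected_graph :: "'v set \<Rightarrow> 'e set \<Rightarrow> ('e \<Rightarrow> 'v \<times> 'v) \<Rightarrow> bool" where
  "connected_graph V E ends \<longleftrightarrow> V \<noteq> {} \<and> (\<forall>u\<in>V. \<forall>v\<in>V. (u, v) \<in> (adj_rel E ends)\<^sup>*)"

definition oriented_edges :: "'e set \<Rightarrow> ('e \<times> bool) set" where
  "oriented_edges E = E \<times> UNIV"

definition head :: "('e \<Rightarrow> 'v \<times> 'v) \<Rightarrow> 'e \<times> bool \<Rightarrow> 'v" where
  "head ends d = (if snd d then snd (ends (fst d)) else fst (ends (fst d)))"

definition tail :: "('e \<Rightarrow> 'v \<times> 'v) \<Rightarrow> 'e \<times> bool \<Rightarrow> 'v" where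
  "tail ends d = (if snd d then fst (ends (fst d)) else snd (ends (fst d)))"

definition indeg :: "('e \<Rightarrow> 'v \<times> 'v) \<Rightarrow> ('e \<times> bool) set \<Rightarrow> 'v \<Rightarrow> nat" where
  "indeg ends P v = card {d \<in> P. head ends d = v}"

text \<open>Divisors are functions 'v \<Rightarrow> int; only their values on V matter.\<close>
type_synonym 'v divisor = "'v \<Rightarrow> int"

definition div_of :: "'v set \<Rightarrow> ('e \<Rightarrow> 'v \<times> 'v) \<Rightarrow> ('e \<times> bool) set \<Rightarrow> 'v divisor" where
  "div_of V ends P = (\<lambda>v. if v \<in> V then int (indeg ends P v) - 1 else 0)"

definition deg :: "'v set \<Rightarrow> 'v divisor \<Rightarrow> int" where
  "deg V D = (\<Sum>v\<in>V. D v)"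

definition oriented_k_spanning_tree ::
  "'v set \<Rightarrow> 'e set \<Rightarrow> ('e \<Rightarrow> 'v \<times> 'v) \<Rightarrow> 'v \<Rightarrow> nat \<Rightarrow> ('e \<times> bool) set \<Rightarrow> bool" where
  "oriented_k_spanning_tree V E ends q k T \<longleftrightarrow>
     T \<subseteq> oriented_edges E \<and>
     card T = card V - 1 + k \<and>
     acyclic {(tail ends d, head ends d) | d. d \<in> T} \<and>
     indeg ends T q = 0 \<and>
     (\<forall>v\<in>V. v \<noteq> q \<longrightarrow> indeg ends T v \<ge> 1)"

definition out_edges :: "'v set \<Rightarrow> 'e set \<Rightarrow> ('e \<Rightarrow> 'v \<times> 'v) \<Rightarrow> 'v set \<Rightarrow> 'v \<Rightarrow> nat" where
  "out_edges V E ends A v = card {e \<in> E.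
      (fst (ends e) = v \<and> snd (ends e) \<in> V - A) \<or> (snd (ends e) = v \<and> fst (ends e) \<in> V - A)}"

definition q_reduced :: "'v set \<Rightarrow> 'e set \<Rightarrow> ('e \<Rightarrow> 'v \<times> 'v) \<Rightarrow> 'v \<Rightarrow> 'v divisor \<Rightarrow> bool" where
  "q_reduced V E ends q D \<longleftrightarrow>
     (\<forall>v\<in>V - {q}. D v \<ge> 0) \<and>
     (\<forall>A. A \<subseteq> V - {q} \<and> A \<noteq> {} \<longrightarrow> (\<exists>v\<in>A. D v < int (out_edges V E ends A v)))"

definition laplacian :: "'e set \<Rightarrow> ('e \<Rightarrow> 'v \<times> 'v) \<Rightarrow> ('v \<Rightarrow> int) \<Rightarrow> 'v divisor" where
  "laplacian E ends f = (\<lambda>v.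
      (\<Sum>e\<in>{e \<in> E. fst (ends e) = v}. f v - f (snd (ends e))) +
      (\<Sum>e\<in>{e \<in> E. snd (ends e) = v}. f v - f (fst (ends e))))"

definition lin_equiv :: "'v set \<Rightarrow> 'e set \<Rightarrow> ('e \<Rightarrow> 'v \<times> 'v) \<Rightarrow> 'v divisor \<Rightarrow> 'v divisor \<Rightarrow> bool" where
  "lin_equiv V E ends D1 D2 \<longleftrightarrow>
     (\<exists>f :: 'v \<Rightarrow> int. \<forall>v\<in>V. D2 v = D1 v - laplacian E ends f v)"

end

theory Submission
  imports Defs
begin

(* Part (1): an oriented k-spanning tree T gives an acyclic relation on V, so
   every nonempty A \<subseteq> V - {q} contains a vertex v none of whose T-in-edges
   start in A.  Distinct in-edges of v lie on distinct edges of G, hence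
   indeg_T(v) \<le> out_edges(A, v), i.e. D_T(v) < out_edges(A, v).

   Part (2): Dhar's burning algorithm run backwards.  Starting from S = {q}
   we repeatedly pick, using reducedness for A = V - S, a vertex v \<notin> S with
   D(v) < out_edges(V - S, v), and orient D(v) + 1 edges from S into v.  The
   resulting set T has indeg_T(w) = D(w) + 1 for w \<noteq> q, no edge into q,
   and a rank function increasing along its edges, hence is acyclic.
   Counting T by heads and using deg D = k - 1, D(q) = -1 gives
   |T| = |V| - 1 + k, so T is an oriented k-spanning tree with D_T = D
   (in particular D_T \<sim> D). *)

lemma multigraph_edge_ends:
  assumes "multigraph V E ends" and "e \<in> E"
  shows "fst (ends e) \<in> V" "snd (ends e) \<in> V" "fst (ends e) \<noteq> snd (ends e)"
  using assms unfolding multigraph_def by auto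

lemma finite_oriented_subset:
  assumes "multigraph V E ends" and "T \<subseteq> oriented_edges E"
  shows "finite T"
proof -
  have "finite (oriented_edges E)"
    using assms(1) unfolding multigraph_def oriented_edges_def by simp
  thus ?thesis using assms(2) finite_subset by blast
qed

text \<open>Since G has no loops, the two orientations of an edge have different heads;
  so the underlying edge map is injective on the oriented edges entering a vertex.\<close>
lemma inj_on_edge_of_in_edges:
  assumes "multigraph V E ends" and "T \<subseteq> oriented_edges E"
  shows "inj_on fst {d \<in> T. head ends d = v}"
proof (rule inj_onI)
  fix d d' assume d: "d \<in> {d \<in> T. head ends d = v}" and d': "d' \<in> {d \<in> T. head ends d = v}"
    and same: "fst d = fst d'"
  obtain e b b' where de: "d = (e, b)" and de': "d' = (e, b')"
    using same by (cases d, cases d') auto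
  have "e \<in> E" using d de assms(2) unfolding oriented_edges_def by auto
  hence "fst (ends e) \<noteq> snd (ends e)" by (rule multigraph_edge_ends[OF assms(1)])
  thus "d = d'" using d d' de de' unfolding head_def by (cases b; cases b') auto
qed

lemma indeg_le_out_edges:
  assumes mg: "multigraph V E ends" and TE: "T \<subseteq> oriented_edges E"
    and from_outside: "\<And>d. d \<in> T \<Longrightarrow> head ends d = v \<Longrightarrow> tail ends d \<notin> A"
  shows "indeg ends T v \<le> out_edges V E ends A v"
proof -
  let ?I = "{d \<in> T. head ends d = v}"
  let ?O = "{e \<in> E. (fst (ends e) = v \<and> snd (ends e) \<in> V - A) \<or>
                     (snd (ends e) = v \<and> fst (ends e) \<in> V - A)}"
  have "fst ` ?I \<subseteq> ?O"
  proof
    fix e assume "e \<in> fst ` ?I"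
    then obtain b where d: "(e, b) \<in> T" "head ends (e, b) = v" by force
    have eE: "e \<in> E" using d(1) TE unfolding oriented_edges_def by auto
    have "tail ends (e, b) \<notin> A" using from_outside d by blast
    thus "e \<in> ?O" using d(2) eE multigraph_edge_ends[OF mg eE]
      unfolding head_def tail_def by (cases b) auto
  qed
  moreover have "finite ?O" using mg unfolding multigraph_def by simp
  ultimately have "card (fst ` ?I) \<le> card ?O" by (rule card_mono[rotated])
  thus ?thesis
    unfolding indeg_def out_edges_def using card_image[OF inj_on_edge_of_in_edges[OF mg TE]]
    by simp
qed

lemma card_eq_sum_indeg:
  assumes "finite T" and "finite W" and "\<And>d. d \<in> T \<Longrightarrow> head ends d \<in> W"
  shows "card T = (\<Sum>w\<in>W. indeg ends T w)"
proof -
  have "T = (\<Union>w\<in>W. {d \<in> T. head ends d = w})" using assms(3) by auto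
  hence "card T = card (\<Union>w\<in>W. {d \<in> T. head ends d = w})" by simp
  also have "\<dots> = (\<Sum>w\<in>W. card {d \<in> T. head ends d = w})"
    using assms(1,2) by (intro card_UN_disjoint) auto
  finally show ?thesis unfolding indeg_def .
qed

lemma acyclic_if_rank_increasing:
  assumes "\<And>x y. (x, y) \<in> R \<Longrightarrow> (r x :: nat) < r y"
  shows "acyclic R"
proof (rule acyclic_subset)
  show "acyclic (inv_image less_than r)" by (rule wf_acyclic) simp
  show "R \<subseteq> inv_image less_than r" using assms by auto
qed

lemma lin_equiv_if_eq_on:
  assumes "\<And>v. v \<in> V \<Longrightarrow> D1 v = D2 v"
  shows "lin_equiv V E ends D1 D2"
  unfolding lin_equiv_def
  by (rule exI[of _ "\<lambda>_. 0"]) (simp add: laplacian_def assms)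

lemma tree_divisor_q_reduced:
  assumes mg: "multigraph V E ends"
    and T: "oriented_k_spanning_tree V E ends q k T"
  shows "q_reduced V E ends q (div_of V ends T)"
proof -
  let ?R = "{(tail ends d, head ends d) | d. d \<in> T}"
  have TE: "T \<subseteq> oriented_edges E" and acyc: "acyclic ?R"
    and indeg_pos: "\<And>v. v \<in> V - {q} \<Longrightarrow> indeg ends T v \<ge> 1"
    using T unfolding oriented_k_spanning_tree_def by auto
  have "?R = (\<lambda>d. (tail ends d, head ends d)) ` T" by auto
  hence "finite ?R" using finite_oriented_subset[OF mg TE] by simp
  hence wf: "wf ?R" using acyc by (rule finite_acyclic_wf)
  show ?thesis unfolding q_reduced_def
  proof (intro conjI allI impI ballI)
    fix v assume "v \<in> V - {q}"
    hence "indeg ends T v \<ge> 1" by (rule indeg_pos)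
    thus "0 \<le> div_of V ends T v" using \<open>v \<in> V - {q}\<close> unfolding div_of_def by simp
  next
    fix A assume A: "A \<subseteq> V - {q} \<and> A \<noteq> {}"
    text \<open>A minimal element of A for the tree relation has no in-edge from A.\<close>
    then obtain x where "x \<in> A" by blast
    then obtain v where vA: "v \<in> A" and minimal: "\<And>y. (y, v) \<in> ?R \<Longrightarrow> y \<notin> A"
      using wfE_min[OF wf] by blast
    have "indeg ends T v \<le> out_edges V E ends A v"
      using minimal by (intro indeg_le_out_edges[OF mg TE]) blast
    hence "div_of V ends T v < int (out_edges V E ends A v)"
      using vA A unfolding div_of_def by auto
    thus "\<exists>v\<in>A. div_of V ends T v < int (out_edges V E ends A v)" using vA by blast
  qed
qed

section \<open>Part (2): the burning construction\<close>

lemma edges_into_vertex_from_burnt: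
  assumes mg: "multigraph V E ends"
    and enough: "n \<le> out_edges V E ends (V - S) v" and SV: "S \<subseteq> V"
  obtains Tv where "Tv \<subseteq> oriented_edges E" "card Tv = n"
    "\<And>d. d \<in> Tv \<Longrightarrow> head ends d = v \<and> tail ends d \<in> S"
proof -
  let ?Ev = "{e \<in> E. (fst (ends e) = v \<and> snd (ends e) \<in> S) \<or> (snd (ends e) = v \<and> fst (ends e) \<in> S)}"
  have "V - (V - S) = S" using SV by auto
  hence "n \<le> card ?Ev" using enough unfolding out_edges_def by simp
  then obtain F where FE: "F \<subseteq> ?Ev" and cF: "card F = n"
    by (rule obtain_subset_with_card_n)
  text \<open>Orient every chosen edge towards v.\<close>
  define Tv where "Tv = (\<lambda>e. (e, snd (ends e) = v)) ` F"
  have "Tv \<subseteq> oriented_edges E" using FE unfolding Tv_def oriented_edges_def by auto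
  moreover have "card Tv = n" unfolding Tv_def using cF by (subst card_image) (auto intro: inj_onI)
  moreover have "head ends d = v \<and> tail ends d \<in> S" if "d \<in> Tv" for d
  proof -
    obtain e where e: "e \<in> F" "d = (e, snd (ends e) = v)" using \<open>d \<in> Tv\<close> unfolding Tv_def by auto
    have "e \<in> E" using e FE by auto
    thus ?thesis using e FE multigraph_edge_ends[OF mg] unfolding head_def tail_def by auto
  qed
  ultimately show ?thesis using that by blast
qed

definition burnt_orientation ::
  "'e set \<Rightarrow> ('e \<Rightarrow> 'v \<times> 'v) \<Rightarrow> 'v divisor \<Rightarrow> 'v set \<Rightarrow> ('e \<times> bool) set \<Rightarrow> ('v \<Rightarrow> nat) \<Rightarrow> bool" where
  "burnt_orientation E ends D U T r \<longleftrightarrow> T \<subseteq> oriented_edges E \<and>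
     (\<forall>d\<in>T. head ends d \<in> U \<and> r (tail ends d) < r (head ends d)) \<and>
     (\<forall>w\<in>U. indeg ends T w = nat (D w) + 1)"

lemma burnt_orientation_insert:
  assumes T': "burnt_orientation E ends D (U - {v}) T' r'" and vU: "v \<in> U"
    and TvE: "Tv \<subseteq> oriented_edges E" and cTv: "card Tv = nat (D v) + 1"
    and Tv: "\<And>d. d \<in> Tv \<Longrightarrow> head ends d = v \<and> tail ends d \<notin> U"
  shows "burnt_orientation E ends D U (T' \<union> Tv) (\<lambda>x. if x \<in> U then r' x + 1 else 0)"
proof -
  let ?r = "\<lambda>x. if x \<in> U then r' x + 1 else 0"
  have T'E: "T' \<subseteq> oriented_edges E"
    and ranked: "\<forall>d\<in>T'. head ends d \<in> U - {v} \<and> r' (tail ends d) < r' (head ends d)"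
    and indeg': "\<forall>w\<in>U - {v}. indeg ends T' w = nat (D w) + 1"
    using T' unfolding burnt_orientation_def by auto
  have rank: "head ends d \<in> U \<and> ?r (tail ends d) < ?r (head ends d)" if d: "d \<in> T' \<union> Tv" for d
  proof (cases "d \<in> T'")
    case True
    have "?r (tail ends d) \<le> r' (tail ends d) + 1" by simp
    thus ?thesis using ranked True by auto
  next
    case False
    thus ?thesis using Tv d vU by auto
  qed
  have indeg: "indeg ends (T' \<union> Tv) w = nat (D w) + 1" if w: "w \<in> U" for w
  proof (cases "w = v")
    case True
    have "{d \<in> T' \<union> Tv. head ends d = w} = Tv" using ranked Tv True by auto
    thus ?thesis using cTv True unfolding indeg_def by simp
  next
    case False
    have "{d \<in> T' \<union> Tv. head ends d = w} = {d \<in> T'. head ends d = w}" using Tv False by auto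
    thus ?thesis using indeg' w False unfolding indeg_def by simp
  qed
  show ?thesis unfolding burnt_orientation_def
    by (intro conjI Un_least T'E TvE ballI rank indeg)
qed

lemma burning:
  assumes mg: "multigraph V E ends" and red: "q_reduced V E ends q D"
    and "q \<in> S" and "S \<subseteq> V"
  shows "\<exists>T r. burnt_orientation E ends D (V - S) T r"
  using assms(3,4)
proof (induction "card (V - S)" arbitrary: S rule: less_induct)
  case (less S)
  show ?case
  proof (cases "V - S = {}")
    case True
    show ?thesis by (intro exI[of _ "{}"] exI[of _ "\<lambda>_. 0"]) (simp add: True burnt_orientation_def)
  next
    case False
    text \<open>Reducedness applied to the unburnt set yields a vertex v that can burn.\<close>
    have "V - S \<subseteq> V - {q}" using less.prems by auto
    then obtain v where vA: "v \<in> V - S" and few: "D v < int (out_edges V E ends (V - S) v)"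
      using red False unfolding q_reduced_def by blast
    have "D v \<ge> 0" using red vA less.prems unfolding q_reduced_def by auto
    with few have "nat (D v) + 1 \<le> out_edges V E ends (V - S) v" by linarith
    then obtain Tv where TvE: "Tv \<subseteq> oriented_edges E" and cTv: "card Tv = nat (D v) + 1"
      and Tv: "\<And>d. d \<in> Tv \<Longrightarrow> head ends d = v \<and> tail ends d \<in> S"
      using edges_into_vertex_from_burnt[OF mg _ less.prems(2)] by blast
    have "finite (V - S)" using mg unfolding multigraph_def by simp
    hence "card (V - insert v S) < card (V - S)"
      using vA by (metis Diff_insert card_Diff1_less)
    moreover have "q \<in> insert v S" "insert v S \<subseteq> V" using less.prems vA by auto
    ultimately obtain T' r' where "burnt_orientation E ends D (V - insert v S) T' r'"
      using less.hyps[of "insert v S"] by auto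
    moreover have "V - insert v S = V - S - {v}" by blast
    ultimately have T': "burnt_orientation E ends D (V - S - {v}) T' r'" by (simp only:)
    have "\<And>d. d \<in> Tv \<Longrightarrow> head ends d = v \<and> tail ends d \<notin> V - S" using Tv by blast
    with T' vA TvE cTv
    have "burnt_orientation E ends D (V - S) (T' \<union> Tv) (\<lambda>x. if x \<in> V - S then r' x + 1 else 0)"
      by (rule burnt_orientation_insert)
    thus ?thesis by blast
  qed
qed

lemma q_reduced_is_tree_divisor:
  assumes mg: "multigraph V E ends" and qV: "q \<in> V"
    and red: "q_reduced V E ends q D" and Dq: "D q = -1" and degD: "deg V D = int k - 1"
  obtains T where "oriented_k_spanning_tree V E ends q k T" "\<And>v. v \<in> V \<Longrightarrow> div_of V ends T v = D v"
proof -
  have fV: "finite V" using mg unfolding multigraph_def by simp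
  obtain T r where "burnt_orientation E ends D (V - {q}) T r"
    using burning[OF mg red, of "{q}"] qV by auto
  hence TE: "T \<subseteq> oriented_edges E"
    and ranked: "\<forall>d\<in>T. head ends d \<in> V - {q} \<and> r (tail ends d) < r (head ends d)"
    and indeg: "\<forall>w\<in>V - {q}. indeg ends T w = nat (D w) + 1"
    unfolding burnt_orientation_def by auto
  have Dnn: "\<And>w. w \<in> V - {q} \<Longrightarrow> D w \<ge> 0" using red unfolding q_reduced_def by auto
  have "{d \<in> T. head ends d = q} = {}" using ranked by auto
  hence q0: "indeg ends T q = 0" unfolding indeg_def by (metis card.empty)
  have "card T = (\<Sum>w\<in>V - {q}. indeg ends T w)"
    using ranked fV by (intro card_eq_sum_indeg[OF finite_oriented_subset[OF mg TE]]) auto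
  hence "int (card T) = (\<Sum>w\<in>V - {q}. int (indeg ends T w))" by simp
  also have "\<dots> = (\<Sum>w\<in>V - {q}. D w + 1)" using indeg Dnn by (intro sum.cong) auto
  also have "\<dots> = (deg V D - D q) + int (card (V - {q}))"
    unfolding deg_def using sum.remove[OF fV qV, of D] by (simp add: sum.distrib)
  finally have "card T = card V - 1 + k" using Dq degD qV fV by simp
  moreover have "acyclic {(tail ends d, head ends d) | d. d \<in> T}"
    using ranked by (intro acyclic_if_rank_increasing[of _ r]) auto
  ultimately have "oriented_k_spanning_tree V E ends q k T"
    unfolding oriented_k_spanning_tree_def using TE q0 indeg by auto
  moreover have "div_of V ends T v = D v" if "v \<in> V" for v
    using that q0 Dq indeg Dnn unfolding div_of_def by (cases "v = q") auto
  ultimately show ?thesis using that by blast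
qed

theorem mainTheorem2:
  fixes V :: "'v set" and E :: "'e set" and ends :: "'e \<Rightarrow> 'v \<times> 'v"
    and q :: 'v and k :: nat
  assumes "multigraph V E ends" and "connected_graph V E ends" and "q \<in> V"
  shows "(\<forall>T. oriented_k_spanning_tree V E ends q k T \<longrightarrow>
            q_reduced V E ends q (div_of V ends T))
       \<and> (\<forall>D :: 'v divisor. q_reduced V E ends q D \<and> D q = -1 \<and> deg V D = int k - 1 \<longrightarrow>
            (\<exists>T. oriented_k_spanning_tree V E ends q k T \<and>
                 lin_equiv V E ends (div_of V ends T) D))"
proof (intro conjI allI impI)
  fix T assume "oriented_k_spanning_tree V E ends q k T"
  thus "q_reduced V E ends q (div_of V ends T)" by (rule tree_divisor_q_reduced[OF assms(1)])
next
  fix D :: "'v divisor"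
  assume "q_reduced V E ends q D \<and> D q = -1 \<and> deg V D = int k - 1"
  then obtain T where "oriented_k_spanning_tree V E ends q k T"
    and "\<And>v. v \<in> V \<Longrightarrow> div_of V ends T v = D v"
    using q_reduced_is_tree_divisor[OF assms(1,3)] by blast
  thus "\<exists>T. oriented_k_spanning_tree V E ends q k T \<and> lin_equiv V E ends (div_of V ends T) D"
    using lin_equiv_if_eq_on by blast
qed

end
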